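(* Let $\Omega\subset\mathbb{C}$ be a simply connected domain, let $(g,\mathcal{P},\mathcal{Q})$ be a Weierstrass data of the first kind on $\Omega$, and let $\lambda\in\mathbb{R}$ be such that $1+i\lambda g(z)\neq0$ for all $z\in\Omega$. Set $g_\lambda:=\frac{g}{1+i\lambda g}$ and $\mathcal{P}_\lambda:=\mathcal{P}$. Then there exists a $\mathcal{C}^2$ function $\mathcal{Q}_\lambda:\Omega\to\mathbb{R}$ satisfying $$(\mathcal{Q}_\lambda)_z=\left(\frac1g+i\lambda\right)\left(g\,\mathcal{Q}_z-i\lambda\,\mathcal{P}_z\right),$$ and for any such $\mathcal{Q}_\lambda$ the triple $(g_\lambda,\mathcal{P}_\lambda,\mathcal{Q}_\lambda)$ is a Weierstrass data of the first kind on $\Omega$.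
   Context: $\Omega\subset\mathbb{R}^2\equiv\mathbb{C}$ has complex coordinate $z=u+iv$, and $\partial_z=\frac12(\partial_u-i\partial_v)$, $\partial_{\overline z}=\frac12(\partial_u+i\partial_v)$; subscripts denote partial derivatives. A Weierstrass data of the first kind on $\Omega$ is a triple $(g,\mathcal{P},\mathcal{Q})$ where $g:\Omega\to\mathbb{C}\setminus\{0\}$ and $\mathcal{P},\mathcal{Q}:\Omega\to\mathbb{R}$ are $\mathcal{C}^2$, satisfying $g_{\overline z}=0$, $\mathcal{P}_{z\overline z}=|g|^2\mathcal{Q}_{z\overline z}$, and $\mathcal{P}_z-|g|^2\mathcal{Q}_z\neq0$ at every point of $\Omega$. *)

theory Defs
  imports "HOL-Analysis.Analysis"
begin

text \<open>We identify \<open>\<real>\<^sup>2\<close> with \<open>\<complex>\<close>, \<open>z = u + i v\<close>. Partial derivatives in the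
  real directions \<open>u\<close> and \<open>v\<close>.\<close>

definition partial_u :: "(complex \<Rightarrow> 'a::real_normed_vector) \<Rightarrow> complex \<Rightarrow> 'a" where
  "partial_u f z = vector_derivative (\<lambda>t::real. f (z + of_real t)) (at 0)"

definition partial_v :: "(complex \<Rightarrow> 'a::real_normed_vector) \<Rightarrow> complex \<Rightarrow> 'a" where
  "partial_v f z = vector_derivative (\<lambda>t::real. f (z + \<i> * of_real t)) (at 0)"

definition C1_on :: "complex set \<Rightarrow> (complex \<Rightarrow> 'a::real_normed_vector) \<Rightarrow> bool" where
  "C1_on \<Omega> f \<longleftrightarrow>
     (\<forall>z\<in>\<Omega>. (\<lambda>t::real. f (z + of_real t)) differentiable (at 0)
            \<and> (\<lambda>t::real. f (z + \<i> * of_real t)) differentiable (at 0))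
     \<and> continuous_on \<Omega> (partial_u f) \<and> continuous_on \<Omega> (partial_v f)"

definition C2_on :: "complex set \<Rightarrow> (complex \<Rightarrow> 'a::real_normed_vector) \<Rightarrow> bool" where
  "C2_on \<Omega> f \<longleftrightarrow> C1_on \<Omega> f \<and> C1_on \<Omega> (partial_u f) \<and> C1_on \<Omega> (partial_v f)"

definition dz :: "(complex \<Rightarrow> complex) \<Rightarrow> complex \<Rightarrow> complex" where
  "dz f z = (partial_u f z - \<i> * partial_v f z) / 2"

definition dzbar :: "(complex \<Rightarrow> complex) \<Rightarrow> complex \<Rightarrow> complex" where
  "dzbar f z = (partial_u f z + \<i> * partial_v f z) / 2"

definition weierstrass_first_kind ::
  "complex set \<Rightarrow> (complex \<Rightarrow> complex) \<Rightarrow> (complex \<Rightarrow> real) \<Rightarrow> (complex \<Rightarrow> real) \<Rightarrow> bool" where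
  "weierstrass_first_kind \<Omega> g P Q \<longleftrightarrow>
     C2_on \<Omega> g \<and> C2_on \<Omega> P \<and> C2_on \<Omega> Q \<and>
     (\<forall>z\<in>\<Omega>.
        g z \<noteq> 0 \<and>
        dzbar g z = 0 \<and>
        dz (dzbar (\<lambda>w. complex_of_real (P w))) z
          = complex_of_real ((cmod (g z))\<^sup>2) * dz (dzbar (\<lambda>w. complex_of_real (Q w))) z \<and>
        dz (\<lambda>w. complex_of_real (P w)) z
          - complex_of_real ((cmod (g z))\<^sup>2) * dz (\<lambda>w. complex_of_real (Q w)) z \<noteq> 0)"

end

theory Submission
  imports Defs "HOL-Complex_Analysis.Complex_Analysis"
begin

text \<open>Since g is holomorphic and P_{z zbar} = |g|^2 Q_{z zbar}, the prescribed
  F = (1/g + i lam) (g Q_z - i lam P_z) satisfies F_zbar = |1 + i lam g|^2 Q_{z zbar}, which is real.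
  So the real 1-form F dz + cnj F dzbar is closed. On the unit disc it is exact by integration along
  radii, and the Riemann mapping theorem carries this over to any simply connected domain; a real
  primitive is the required Q_lam. For any such Q_lam we get (Q_lam)_{z zbar} = F_zbar, hence
  |g_lam|^2 (Q_lam)_{z zbar} = |g|^2 Q_{z zbar} = P_{z zbar}, and
  P_z - |g_lam|^2 (Q_lam)_z = (P_z - |g|^2 Q_z) / cnj (1 + i lam g) is nonzero.\<close>

section \<open>Functions with continuous partial derivatives\<close>

definition C1_partials_on ::
  "complex set \<Rightarrow> (complex \<Rightarrow> 'a::real_normed_vector) \<Rightarrow> (complex \<Rightarrow> 'a) \<Rightarrow> (complex \<Rightarrow> 'a) \<Rightarrow> bool"
  where
  "C1_partials_on S f fu fv \<longleftrightarrow>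
     (\<forall>z\<in>S. (f has_derivative (\<lambda>h. Re h *\<^sub>R fu z + Im h *\<^sub>R fv z)) (at z)) \<and>
     continuous_on S fu \<and> continuous_on S fv"

lemma has_vector_derivative_along_line:
  fixes f :: "complex \<Rightarrow> 'a::real_normed_vector"
  assumes "(f has_derivative D) (at (w + of_real s * e))"
  shows "((\<lambda>t. f (w + of_real t * e)) has_vector_derivative D e) (at s)"
proof -
  have "((\<lambda>t::real. w + of_real t * e) has_derivative (\<lambda>t. of_real t * e)) (at s)"
    by (auto intro!: derivative_eq_intros)
  from has_derivative_compose[OF this assms]
  have "((\<lambda>t. f (w + of_real t * e)) has_derivative (\<lambda>t. D (of_real t * e))) (at s)" .
  moreover have "D (of_real t * e) = t *\<^sub>R D e" for t
    using linear_cmul[OF has_derivative_linear[OF assms], of t e] by (simp add: scaleR_conv_of_real)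
  ultimately show ?thesis
    by (simp add: has_vector_derivative_def)
qed

lemma C1_partials_on_line_derivatives:
  fixes f :: "complex \<Rightarrow> 'a::real_normed_vector"
  assumes "C1_partials_on S f fu fv" "z + of_real x + \<i> * of_real y \<in> S"
  shows "((\<lambda>x. f (z + of_real x + \<i> * of_real y)) has_vector_derivative
            fu (z + of_real x + \<i> * of_real y)) (at x)"
    and "((\<lambda>y. f (z + of_real x + \<i> * of_real y)) has_vector_derivative
            fv (z + of_real x + \<i> * of_real y)) (at y)"
proof -
  let ?p = "z + of_real x + \<i> * of_real y"
  have d: "(f has_derivative (\<lambda>h. Re h *\<^sub>R fu ?p + Im h *\<^sub>R fv ?p)) (at ?p)"
    using assms unfolding C1_partials_on_def by blast
  have "(f has_derivative (\<lambda>h. Re h *\<^sub>R fu ?p + Im h *\<^sub>R fv ?p))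
          (at ((z + \<i> * of_real y) + of_real x * 1))"
    using d by (simp add: algebra_simps)
  from has_vector_derivative_along_line[OF this]
  show "((\<lambda>x. f (z + of_real x + \<i> * of_real y)) has_vector_derivative fu ?p) (at x)"
    by (simp add: algebra_simps)
  have "(f has_derivative (\<lambda>h. Re h *\<^sub>R fu ?p + Im h *\<^sub>R fv ?p)) (at ((z + of_real x) + of_real y * \<i>))"
    using d by (simp add: algebra_simps)
  from has_vector_derivative_along_line[OF this]
  show "((\<lambda>y. f (z + of_real x + \<i> * of_real y)) has_vector_derivative fv ?p) (at y)"
    by (simp add: algebra_simps)
qed

lemma C1_partials_on_partial_derivatives:
  fixes f :: "complex \<Rightarrow> 'a::real_normed_vector"
  assumes "C1_partials_on S f fu fv" "z \<in> S"
  shows "partial_u f z = fu z" and "partial_v f z = fv z"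
  using vector_derivative_at[OF C1_partials_on_line_derivatives(1)[OF assms(1), of z 0 0]]
    vector_derivative_at[OF C1_partials_on_line_derivatives(2)[OF assms(1), of z 0 0]] assms(2)
  by (simp_all add: partial_u_def partial_v_def)

lemma C1_partials_on_imp_C1_on:
  fixes f :: "complex \<Rightarrow> 'a::real_normed_vector"
  assumes "C1_partials_on S f fu fv"
  shows "C1_on S f"
  unfolding C1_on_def
proof (intro conjI ballI)
  fix z assume z: "z \<in> S"
  show "(\<lambda>t. f (z + of_real t)) differentiable at 0"
    using C1_partials_on_line_derivatives(1)[OF assms, of z 0 0] z
    by (auto simp: has_vector_derivative_def differentiable_def)
  show "(\<lambda>t. f (z + \<i> * of_real t)) differentiable at 0"
    using C1_partials_on_line_derivatives(2)[OF assms, of z 0 0] z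
    by (auto simp: has_vector_derivative_def differentiable_def)
next
  show "continuous_on S (partial_u f)" "continuous_on S (partial_v f)"
    using assms C1_partials_on_partial_derivatives[OF assms]
    by (auto simp: C1_partials_on_def cong: continuous_on_cong)
qed

lemma C1_partials_on_cong:
  fixes f :: "complex \<Rightarrow> 'a::real_normed_vector"
  assumes "C1_partials_on S f fu fv" "open S"
    and "\<And>z. z \<in> S \<Longrightarrow> f' z = f z" "\<And>z. z \<in> S \<Longrightarrow> fu' z = fu z" "\<And>z. z \<in> S \<Longrightarrow> fv' z = fv z"
  shows "C1_partials_on S f' fu' fv'"
  unfolding C1_partials_on_def
proof (intro conjI ballI)
  fix z assume z: "z \<in> S"
  have "(f has_derivative (\<lambda>h. Re h *\<^sub>R fu z + Im h *\<^sub>R fv z)) (at z)"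
    using assms(1) z unfolding C1_partials_on_def by blast
  then have "(f' has_derivative (\<lambda>h. Re h *\<^sub>R fu z + Im h *\<^sub>R fv z)) (at z)"
    by (rule has_derivative_transform_within_open[OF _ assms(2) z]) (simp add: assms(3))
  then show "(f' has_derivative (\<lambda>h. Re h *\<^sub>R fu' z + Im h *\<^sub>R fv' z)) (at z)"
    using assms(4,5) z by simp
next
  show "continuous_on S fu'" "continuous_on S fv'"
    using assms(1,4,5) by (auto simp: C1_partials_on_def cong: continuous_on_cong)
qed

lemma C1_partials_on_linear:
  fixes f :: "complex \<Rightarrow> 'a::real_normed_vector" and L :: "'a \<Rightarrow> 'b::real_normed_vector"
  assumes "C1_partials_on S f fu fv" "bounded_linear L"
  shows "C1_partials_on S (\<lambda>z. L (f z)) (\<lambda>z. L (fu z)) (\<lambda>z. L (fv z))"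
  unfolding C1_partials_on_def
proof (intro conjI ballI)
  interpret L: bounded_linear L by (rule assms(2))
  fix z assume "z \<in> S"
  then have "(f has_derivative (\<lambda>h. Re h *\<^sub>R fu z + Im h *\<^sub>R fv z)) (at z)"
    using assms(1) unfolding C1_partials_on_def by blast
  from L.has_derivative[OF this]
  show "((\<lambda>z. L (f z)) has_derivative (\<lambda>h. Re h *\<^sub>R L (fu z) + Im h *\<^sub>R L (fv z))) (at z)"
    by (simp add: L.add L.scaleR)
next
  show "continuous_on S (\<lambda>z. L (fu z))" "continuous_on S (\<lambda>z. L (fv z))"
    using assms(1) unfolding C1_partials_on_def
    by (auto intro: continuous_on_compose2[OF linear_continuous_on[OF assms(2)]])
qed

lemma dist_add_real_imag_le: "dist z (z + of_real x + \<i> * of_real y) \<le> \<bar>x\<bar> + \<bar>y\<bar>"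
proof -
  have "dist z (z + of_real x + \<i> * of_real y) = cmod (of_real x + \<i> * of_real y)"
    unfolding dist_norm norm_minus_commute[of z] by (simp add: add.assoc)
  then show ?thesis
    using cmod_le[of "of_real x + \<i> * of_real y"] by simp
qed

lemma has_derivative_from_real_coordinates:
  fixes f :: "complex \<Rightarrow> 'a::real_normed_vector"
  assumes "((\<lambda>(x, y). f (z + of_real x + \<i> * of_real y)) has_derivative (\<lambda>(x, y). x *\<^sub>R u + y *\<^sub>R v))
    (at (0, 0))"
  shows "(f has_derivative (\<lambda>h. Re h *\<^sub>R u + Im h *\<^sub>R v)) (at z)"
proof -
  have coordinates: "((\<lambda>h. (Re (h - z), Im (h - z))) has_derivative (\<lambda>h. (Re h, Im h))) (at z)"
    by (auto intro!: derivative_eq_intros)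
  have "((\<lambda>(x, y). f (z + of_real x + \<i> * of_real y)) has_derivative (\<lambda>(x, y). x *\<^sub>R u + y *\<^sub>R v))
      (at (Re (z - z), Im (z - z)))"
    using assms by simp
  from has_derivative_compose[OF coordinates this]
  have "((\<lambda>h. f (z + of_real (Re (h - z)) + \<i> * of_real (Im (h - z)))) has_derivative
      (\<lambda>h. Re h *\<^sub>R u + Im h *\<^sub>R v)) (at z)"
    by (simp only: case_prod_conv)
  moreover have "z + of_real (Re (h - z)) + \<i> * of_real (Im (h - z)) = h" for h
    by (simp add: complex_eq_iff)
  ultimately show ?thesis
    by (simp only:)
qed

lemma has_vector_derivative_vertical_translate:
  fixes f :: "complex \<Rightarrow> 'a::real_normed_vector"
  assumes "((\<lambda>t. f (z + of_real x + \<i> * of_real y + \<i> * of_real t)) has_vector_derivative D) (at 0)"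
  shows "((\<lambda>y. f (z + of_real x + \<i> * of_real y)) has_vector_derivative D) (at y)"
proof -
  have "((\<lambda>y'. y' - y) has_vector_derivative 1) (at y)"
    by (auto intro!: derivative_eq_intros)
  moreover have "((\<lambda>t. f (z + of_real x + \<i> * of_real y + \<i> * of_real t)) has_vector_derivative D)
      (at ((\<lambda>y'. y' - y) y))"
    using assms by simp
  ultimately have "(((\<lambda>t. f (z + of_real x + \<i> * of_real y + \<i> * of_real t)) \<circ> (\<lambda>y'. y' - y))
      has_vector_derivative 1 *\<^sub>R D) (at y)"
    by (rule vector_diff_chain_at)
  moreover have "z + of_real x + \<i> * of_real y + \<i> * of_real (y' - y) = z + of_real x + \<i> * of_real y'" for y'
    by (simp add: algebra_simps)
  ultimately show ?thesis
    by (simp only: o_def scaleR_one)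
qed

lemma has_derivative_of_partials:
  fixes f :: "complex \<Rightarrow> 'a::real_normed_vector"
  assumes S: "open S" "z \<in> S"
    and fu: "((\<lambda>t. f (z + of_real t)) has_vector_derivative fu) (at 0)"
    and fv: "\<And>w. w \<in> S \<Longrightarrow> ((\<lambda>t. f (w + \<i> * of_real t)) has_vector_derivative fv w) (at 0)"
    and fv_cont: "continuous_on S fv"
  shows "(f has_derivative (\<lambda>h. Re h *\<^sub>R fu + Im h *\<^sub>R fv z)) (at z)"
proof -
  obtain r where r: "r > 0" "ball z r \<subseteq> S"
    using S open_contains_ball by blast
  define X where "X = ball (0::real) (r / 2)"
  define F where "F x y = f (z + of_real x + \<i> * of_real y)" for x y :: real
  have in_S: "z + of_real x + \<i> * of_real y \<in> S" if "x \<in> X" "y \<in> X" for x y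
  proof -
    have "dist z (z + of_real x + \<i> * of_real y) < r"
      using dist_add_real_imag_le[of z x y] that by (simp add: X_def dist_real_def)
    then show ?thesis
      using r(2) by auto
  qed
  have Fx: "((\<lambda>x. F x 0) has_derivative (\<lambda>t. t *\<^sub>R fu)) (at 0 within X)"
    using fu by (auto simp: F_def has_vector_derivative_def intro: has_derivative_at_withinI)
  have Fy: "((\<lambda>y. F x y) has_derivative blinfun_scaleR_left (fv (z + of_real x + \<i> * of_real y)))
      (at y within X)" if "x \<in> X" "y \<in> X" for x y
    using has_vector_derivative_vertical_translate[OF fv[OF in_S[OF that]]]
    by (auto simp: F_def has_vector_derivative_def blinfun_scaleR_left.rep_eq intro: has_derivative_at_withinI)
  have "isCont fv z"
    using fv_cont S by (simp add: continuous_on_eq_continuous_at)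
  have "isCont (\<lambda>p. fv (z + of_real (fst p) + \<i> * of_real (snd p))) (0, 0)"
    by (rule isCont_o2[where g = fv]) (use \<open>isCont fv z\<close> in \<open>auto intro!: continuous_intros\<close>)
  then have "isCont (\<lambda>p. blinfun_scaleR_left (fv (z + of_real (fst p) + \<i> * of_real (snd p)))) (0, 0)"
    by (rule continuous_at_compose[unfolded o_def, OF _ linear_continuous_at[OF bounded_linear_blinfun_scaleR_left]])
  then have "continuous (at (0, 0) within X \<times> X)
      (\<lambda>(x, y). blinfun_scaleR_left (fv (z + of_real x + \<i> * of_real y)))"
    by (simp add: continuous_at_imp_continuous_within case_prod_beta')
  from has_derivative_partialsI[OF Fx Fy this]
  have "((\<lambda>(x, y). F x y) has_derivative (\<lambda>(x, y). x *\<^sub>R fu + y *\<^sub>R fv z)) (at (0, 0) within X \<times> X)"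
    using r by (simp add: X_def blinfun_scaleR_left.rep_eq)
  moreover have "at (0, 0) within X \<times> X = at (0::real, 0::real)"
    using r by (intro at_within_open) (auto simp: X_def open_Times)
  ultimately show ?thesis
    by (intro has_derivative_from_real_coordinates) (simp add: F_def)
qed

lemma C1_on_imp_C1_partials_on:
  fixes f :: "complex \<Rightarrow> 'a::real_normed_vector"
  assumes "open S" "C1_on S f"
  shows "C1_partials_on S f (partial_u f) (partial_v f)"
proof -
  have cont: "continuous_on S (partial_u f)" "continuous_on S (partial_v f)"
    using assms(2) by (auto simp: C1_on_def)
  have du: "((\<lambda>t. f (z + of_real t)) has_vector_derivative partial_u f z) (at 0)"
    and dv: "((\<lambda>t. f (z + \<i> * of_real t)) has_vector_derivative partial_v f z) (at 0)" if "z \<in> S" for z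
    using assms(2) that by (auto simp: C1_on_def partial_u_def partial_v_def vector_derivative_works)
  show ?thesis
    unfolding C1_partials_on_def using has_derivative_of_partials[OF assms(1) _ du dv cont(2)] cont by blast
qed

lemma mixed_second_difference_mvt:
  fixes f fx fxy :: "real \<Rightarrow> real \<Rightarrow> real"
  assumes t: "t > 0"
    and fx: "\<And>x y. x \<in> {0..t} \<Longrightarrow> y \<in> {0..t} \<Longrightarrow> ((\<lambda>x. f x y) has_real_derivative fx x y) (at x)"
    and fxy: "\<And>x y. x \<in> {0..t} \<Longrightarrow> y \<in> {0..t} \<Longrightarrow> ((\<lambda>y. fx x y) has_real_derivative fxy x y) (at y)"
  obtains \<xi> \<eta> where "\<xi> \<in> {0<..<t}" "\<eta> \<in> {0<..<t}" "f t t - f t 0 - f 0 t + f 0 0 = t * t * fxy \<xi> \<eta>"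
proof -
  have "\<exists>\<xi>>0. \<xi> < t \<and> (f t t - f t 0) - (f 0 t - f 0 0) = (t - 0) * (fx \<xi> t - fx \<xi> 0)"
    using t by (intro MVT2) (auto intro!: DERIV_diff fx)
  then obtain \<xi> where \<xi>: "0 < \<xi>" "\<xi> < t" "(f t t - f t 0) - (f 0 t - f 0 0) = t * (fx \<xi> t - fx \<xi> 0)"
    by auto
  have "\<exists>\<eta>>0. \<eta> < t \<and> fx \<xi> t - fx \<xi> 0 = (t - 0) * fxy \<xi> \<eta>"
    using t \<xi> by (intro MVT2) (auto intro!: fxy)
  then obtain \<eta> where \<eta>: "0 < \<eta>" "\<eta> < t" "fx \<xi> t - fx \<xi> 0 = t * fxy \<xi> \<eta>"
    by auto
  show ?thesis
    using \<xi> \<eta> by (intro that[of \<xi> \<eta>]) auto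
qed

lemma C1_partials_on_mixed_partials_meet:
  fixes P :: "complex \<Rightarrow> real"
  assumes S: "open S" and P: "C1_partials_on S P Pu Pv"
    and Pu: "C1_partials_on S Pu Puu Puv" and Pv: "C1_partials_on S Pv Pvu Pvv"
    and "z \<in> S" "d > 0"
  obtains w w' where "dist w z < d" "dist w' z < d" "Puv w = Pvu w'"
proof -
  obtain r where r: "r > 0" "ball z r \<subseteq> S"
    using S \<open>z \<in> S\<close> open_contains_ball by blast
  define t where "t = min r d / 4"
  have "t > 0"
    using r \<open>d > 0\<close> by (simp add: t_def)
  define p where "p x y = z + of_real x + \<i> * of_real y" for x y
  have near: "p x y \<in> S" "dist (p x y) z < d" if "x \<in> {0..t}" "y \<in> {0..t}" for x y
  proof -
    have "dist z (p x y) < min r d"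
      using dist_add_real_imag_le[of z x y] that r \<open>d > 0\<close> by (simp add: p_def t_def)
    then show "p x y \<in> S" "dist (p x y) z < d"
      using r(2) by (auto simp: dist_commute)
  qed
  have Px: "((\<lambda>x. P (p x y)) has_real_derivative Pu (p x y)) (at x)"
    and Py: "((\<lambda>y. P (p x y)) has_real_derivative Pv (p x y)) (at y)"
    and Puy: "((\<lambda>y. Pu (p x y)) has_real_derivative Puv (p x y)) (at y)"
    and Pvx: "((\<lambda>x. Pv (p x y)) has_real_derivative Pvu (p x y)) (at x)"
    if "x \<in> {0..t}" "y \<in> {0..t}" for x y
    using near(1)[OF that] unfolding p_def has_real_derivative_iff_has_vector_derivative
    by (rule C1_partials_on_line_derivatives[OF P] C1_partials_on_line_derivatives[OF Pu]
        C1_partials_on_line_derivatives[OF Pv])+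
  obtain \<xi> \<eta> where "\<xi> \<in> {0<..<t}" "\<eta> \<in> {0<..<t}"
    and uv: "P (p t t) - P (p t 0) - P (p 0 t) + P (p 0 0) = t * t * Puv (p \<xi> \<eta>)"
    by (rule mixed_second_difference_mvt[OF \<open>t > 0\<close> Px Puy])
  moreover obtain \<eta>' \<xi>' where "\<eta>' \<in> {0<..<t}" "\<xi>' \<in> {0<..<t}"
    and vu: "P (p t t) - P (p 0 t) - P (p t 0) + P (p 0 0) = t * t * Pvu (p \<xi>' \<eta>')"
    by (rule mixed_second_difference_mvt[OF \<open>t > 0\<close> Py Pvx])
  moreover have "Puv (p \<xi> \<eta>) = Pvu (p \<xi>' \<eta>')"
    using uv vu \<open>t > 0\<close> by (simp add: algebra_simps)
  ultimately show ?thesis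
    using near(2) by (intro that[of "p \<xi> \<eta>" "p \<xi>' \<eta>'"]) auto
qed

lemma C1_partials_on_mixed_partials_eq:
  fixes P :: "complex \<Rightarrow> real"
  assumes "open S" "C1_partials_on S P Pu Pv"
    and Pu: "C1_partials_on S Pu Puu Puv" and Pv: "C1_partials_on S Pv Pvu Pvv" and z: "z \<in> S"
  shows "Puv z = Pvu z"
proof (rule ccontr)
  assume "Puv z \<noteq> Pvu z"
  define e where "e = \<bar>Puv z - Pvu z\<bar> / 2"
  have "e > 0"
    using \<open>Puv z \<noteq> Pvu z\<close> by (simp add: e_def)
  have "isCont Puv z" "isCont Pvu z"
    using assms by (auto simp: C1_partials_on_def continuous_on_eq_continuous_at)
  then obtain d1 d2 where d: "d1 > 0" "\<And>w. dist w z < d1 \<Longrightarrow> dist (Puv w) (Puv z) < e"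
    "d2 > 0" "\<And>w. dist w z < d2 \<Longrightarrow> dist (Pvu w) (Pvu z) < e"
    using \<open>e > 0\<close> unfolding continuous_at_eps_delta by blast
  obtain w w' where w: "dist w z < min d1 d2" "dist w' z < min d1 d2" and "Puv w = Pvu w'"
    using C1_partials_on_mixed_partials_meet[OF assms, of "min d1 d2"] d by auto
  have "dist (Puv w) (Puv z) < e" "dist (Pvu w') (Pvu z) < e"
    using w d by auto
  with \<open>Puv w = Pvu w'\<close> show False
    by (auto simp: e_def dist_real_def abs_if split: if_splits)
qed

section \<open>Wirtinger calculus\<close>

definition wirtinger_C1_on ::
  "complex set \<Rightarrow> (complex \<Rightarrow> complex) \<Rightarrow> (complex \<Rightarrow> complex) \<Rightarrow> (complex \<Rightarrow> complex) \<Rightarrow> bool"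
  where
  "wirtinger_C1_on S f a b \<longleftrightarrow>
     (\<forall>z\<in>S. (f has_derivative (\<lambda>h. a z * h + b z * cnj h)) (at z)) \<and>
     continuous_on S a \<and> continuous_on S b"

lemma scaleR_Re_Im_eq_wirtinger:
  "Re h *\<^sub>R u + Im h *\<^sub>R v = (u - \<i> * v) / 2 * h + (u + \<i> * v) / 2 * cnj h"
  by (simp add: complex_eq_iff scaleR_conv_of_real field_simps)

lemma wirtinger_eq_scaleR_Re_Im:
  "a * h + b * cnj h = Re h *\<^sub>R (a + b) + Im h *\<^sub>R (\<i> * (a - b))"
  by (simp add: complex_eq_iff scaleR_conv_of_real algebra_simps)

lemma C1_partials_on_imp_wirtinger_C1_on:
  assumes "C1_partials_on S f fu fv"
  shows "wirtinger_C1_on S f (\<lambda>z. (fu z - \<i> * fv z) / 2) (\<lambda>z. (fu z + \<i> * fv z) / 2)"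
  using assms unfolding C1_partials_on_def wirtinger_C1_on_def scaleR_Re_Im_eq_wirtinger
  by (auto intro!: continuous_intros)

lemma wirtinger_C1_on_imp_C1_partials_on:
  assumes "wirtinger_C1_on S f a b"
  shows "C1_partials_on S f (\<lambda>z. a z + b z) (\<lambda>z. \<i> * (a z - b z))"
  using assms unfolding C1_partials_on_def wirtinger_C1_on_def wirtinger_eq_scaleR_Re_Im
  by (auto intro!: continuous_intros)

lemma wirtinger_C1_on_derivatives:
  assumes "wirtinger_C1_on S f a b" "z \<in> S"
  shows "dz f z = a z" "dzbar f z = b z"
    and "partial_u f z = a z + b z" "partial_v f z = \<i> * (a z - b z)"
proof -
  note partials = C1_partials_on_partial_derivatives[OF wirtinger_C1_on_imp_C1_partials_on[OF assms(1)] assms(2)]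
  then show "partial_u f z = a z + b z" "partial_v f z = \<i> * (a z - b z)"
    by simp_all
  show "dz f z = a z" "dzbar f z = b z"
    unfolding dz_def dzbar_def partials by (simp_all add: field_simps)
qed

lemma wirtinger_C1_on_cong:
  assumes "wirtinger_C1_on S f a b" "open S"
    and "\<And>z. z \<in> S \<Longrightarrow> f' z = f z" "\<And>z. z \<in> S \<Longrightarrow> a' z = a z" "\<And>z. z \<in> S \<Longrightarrow> b' z = b z"
  shows "wirtinger_C1_on S f' a' b'"
  unfolding wirtinger_C1_on_def
proof (intro conjI ballI)
  fix z assume z: "z \<in> S"
  have "(f has_derivative (\<lambda>h. a z * h + b z * cnj h)) (at z)"
    using assms(1) z unfolding wirtinger_C1_on_def by blast
  then have "(f' has_derivative (\<lambda>h. a z * h + b z * cnj h)) (at z)"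
    by (rule has_derivative_transform_within_open[OF _ assms(2) z]) (simp add: assms(3))
  then show "(f' has_derivative (\<lambda>h. a' z * h + b' z * cnj h)) (at z)"
    using assms(4,5) z by simp
next
  show "continuous_on S a'" "continuous_on S b'"
    using assms(1,4,5) by (auto simp: wirtinger_C1_on_def cong: continuous_on_cong)
qed

lemma wirtinger_C1_on_imp_continuous_on:
  assumes "wirtinger_C1_on S f a b"
  shows "continuous_on S f"
  using assms unfolding wirtinger_C1_on_def
  by (meson continuous_at_imp_continuous_on has_derivative_continuous)

lemma C1_on_imp_wirtinger_C1_on:
  assumes "open S" "C1_on S f"
  shows "wirtinger_C1_on S f (dz f) (dzbar f)"
  using C1_partials_on_imp_wirtinger_C1_on[OF C1_on_imp_C1_partials_on[OF assms]]
  by (simp add: dz_def[abs_def] dzbar_def[abs_def])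

lemma wirtinger_C1_on_const: "wirtinger_C1_on S (\<lambda>z. c) (\<lambda>z. 0) (\<lambda>z. 0)"
  unfolding wirtinger_C1_on_def by (auto intro!: derivative_eq_intros)

lemma wirtinger_C1_on_add:
  assumes "wirtinger_C1_on S f a b" "wirtinger_C1_on S g c d"
  shows "wirtinger_C1_on S (\<lambda>z. f z + g z) (\<lambda>z. a z + c z) (\<lambda>z. b z + d z)"
  using assms unfolding wirtinger_C1_on_def
  by (auto intro!: continuous_intros has_derivative_add[THEN has_derivative_eq_rhs] simp: algebra_simps)

lemma wirtinger_C1_on_diff:
  assumes "wirtinger_C1_on S f a b" "wirtinger_C1_on S g c d"
  shows "wirtinger_C1_on S (\<lambda>z. f z - g z) (\<lambda>z. a z - c z) (\<lambda>z. b z - d z)"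
  using assms unfolding wirtinger_C1_on_def
  by (auto intro!: continuous_intros has_derivative_diff[THEN has_derivative_eq_rhs] simp: algebra_simps)

lemma wirtinger_C1_on_mult:
  assumes "wirtinger_C1_on S f a b" "wirtinger_C1_on S g c d"
  shows "wirtinger_C1_on S (\<lambda>z. f z * g z) (\<lambda>z. a z * g z + f z * c z) (\<lambda>z. b z * g z + f z * d z)"
  using assms wirtinger_C1_on_imp_continuous_on[OF assms(1)] wirtinger_C1_on_imp_continuous_on[OF assms(2)]
  unfolding wirtinger_C1_on_def
  by (auto intro!: continuous_intros has_derivative_mult[THEN has_derivative_eq_rhs] simp: algebra_simps)

lemma wirtinger_C1_on_cmult:
  assumes "wirtinger_C1_on S f a b"
  shows "wirtinger_C1_on S (\<lambda>z. k * f z) (\<lambda>z. k * a z) (\<lambda>z. k * b z)"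
  using wirtinger_C1_on_mult[OF wirtinger_C1_on_const assms, of k] by simp

lemma wirtinger_C1_on_inverse:
  assumes "wirtinger_C1_on S f a b" "\<And>z. z \<in> S \<Longrightarrow> f z \<noteq> 0"
  shows "wirtinger_C1_on S (\<lambda>z. inverse (f z)) (\<lambda>z. - a z / (f z)\<^sup>2) (\<lambda>z. - b z / (f z)\<^sup>2)"
  unfolding wirtinger_C1_on_def
proof (intro conjI ballI)
  fix z assume z: "z \<in> S"
  have "(f has_derivative (\<lambda>h. a z * h + b z * cnj h)) (at z)"
    using assms(1) z unfolding wirtinger_C1_on_def by blast
  from Deriv.has_derivative_inverse[OF assms(2)[OF z] this]
  show "((\<lambda>z. inverse (f z)) has_derivative (\<lambda>h. - a z / (f z)\<^sup>2 * h + - b z / (f z)\<^sup>2 * cnj h)) (at z)"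
    by (rule has_derivative_eq_rhs) (use assms(2)[OF z] in \<open>auto simp: fun_eq_iff field_simps power2_eq_square\<close>)
next
  show "continuous_on S (\<lambda>z. - a z / (f z)\<^sup>2)" "continuous_on S (\<lambda>z. - b z / (f z)\<^sup>2)"
    using assms wirtinger_C1_on_imp_continuous_on[OF assms(1)] unfolding wirtinger_C1_on_def
    by (auto intro!: continuous_intros)
qed

lemma wirtinger_C1_on_cnj:
  assumes "wirtinger_C1_on S f a b"
  shows "wirtinger_C1_on S (\<lambda>z. cnj (f z)) (\<lambda>z. cnj (b z)) (\<lambda>z. cnj (a z))"
  using assms unfolding wirtinger_C1_on_def
  by (auto intro!: continuous_intros has_derivative_cnj[THEN has_derivative_eq_rhs] simp: algebra_simps)

lemma wirtinger_C1_on_compose_holomorphic: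
  assumes "wirtinger_C1_on S F a b" "\<And>w. w \<in> T \<Longrightarrow> (\<psi> has_field_derivative \<psi>' w) (at w)"
    and "continuous_on T \<psi>'" "\<psi> ` T \<subseteq> S"
  shows "wirtinger_C1_on T (\<lambda>w. F (\<psi> w)) (\<lambda>w. a (\<psi> w) * \<psi>' w) (\<lambda>w. b (\<psi> w) * cnj (\<psi>' w))"
  unfolding wirtinger_C1_on_def
proof (intro conjI ballI)
  fix w assume w: "w \<in> T"
  have "(F has_derivative (\<lambda>h. a (\<psi> w) * h + b (\<psi> w) * cnj h)) (at (\<psi> w))"
    using assms(1,4) w unfolding wirtinger_C1_on_def by blast
  from has_derivative_compose[OF assms(2)[OF w, unfolded has_field_derivative_def] this]
  show "((\<lambda>w. F (\<psi> w)) has_derivative (\<lambda>h. a (\<psi> w) * \<psi>' w * h + b (\<psi> w) * cnj (\<psi>' w) * cnj h)) (at w)"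
    by (simp add: algebra_simps)
next
  have "continuous_on T \<psi>"
    using assms(2) by (meson DERIV_isCont continuous_at_imp_continuous_on)
  moreover have "continuous_on S a" "continuous_on S b"
    using assms(1) unfolding wirtinger_C1_on_def by auto
  ultimately show "continuous_on T (\<lambda>w. a (\<psi> w) * \<psi>' w)" "continuous_on T (\<lambda>w. b (\<psi> w) * cnj (\<psi>' w))"
    using assms(3,4) by (auto intro!: continuous_intros elim: continuous_on_compose2)
qed

lemma holomorphic_on_imp_wirtinger_C1_on:
  assumes "f holomorphic_on S" "open S"
  shows "wirtinger_C1_on S f (deriv f) (\<lambda>z. 0)"
  unfolding wirtinger_C1_on_def
proof (intro conjI ballI)
  fix z assume "z \<in> S"
  then have "(f has_field_derivative deriv f z) (at z)"
    using assms holomorphic_derivI by blast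
  then show "(f has_derivative (\<lambda>h. deriv f z * h + 0 * cnj h)) (at z)"
    by (simp add: has_field_derivative_def)
next
  show "continuous_on S (deriv f)"
    using assms holomorphic_deriv holomorphic_on_imp_continuous_on by blast
qed simp

lemma wirtinger_C1_on_imp_holomorphic_on:
  assumes "wirtinger_C1_on S f a (\<lambda>z. 0)"
  shows "f holomorphic_on S"
proof -
  have "(f has_field_derivative a z) (at z)" if "z \<in> S" for z
  proof -
    have "(f has_derivative (\<lambda>h. a z * h + 0 * cnj h)) (at z)"
      using assms that unfolding wirtinger_C1_on_def by blast
    then show ?thesis
      by (simp add: has_field_derivative_def)
  qed
  then show ?thesis
    unfolding holomorphic_on_def field_differentiable_def using has_field_derivative_at_within by blast
qed

lemma wirtinger_C1_on_imp_C2_on: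
  assumes S: "open S"
    and f: "wirtinger_C1_on S f a b" and "wirtinger_C1_on S a a1 b1" "wirtinger_C1_on S b a2 b2"
  shows "C2_on S f"
proof -
  have "wirtinger_C1_on S (partial_u f) (\<lambda>z. a1 z + a2 z) (\<lambda>z. b1 z + b2 z)"
    using wirtinger_C1_on_add[OF assms(3,4)]
    by (rule wirtinger_C1_on_cong[OF _ S]) (auto simp: wirtinger_C1_on_derivatives[OF f])
  moreover have "wirtinger_C1_on S (partial_v f) (\<lambda>z. \<i> * (a1 z - a2 z)) (\<lambda>z. \<i> * (b1 z - b2 z))"
    using wirtinger_C1_on_cmult[OF wirtinger_C1_on_diff[OF assms(3,4)]]
    by (rule wirtinger_C1_on_cong[OF _ S]) (auto simp: wirtinger_C1_on_derivatives[OF f])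
  ultimately show ?thesis
    using f unfolding C2_on_def
    by (blast intro: C1_partials_on_imp_C1_on wirtinger_C1_on_imp_C1_partials_on)
qed

lemma holomorphic_on_imp_C2_on:
  assumes "open S" "f holomorphic_on S"
  shows "C2_on S f"
  using assms holomorphic_deriv[OF assms(2,1)]
  by (blast intro: wirtinger_C1_on_imp_C2_on holomorphic_on_imp_wirtinger_C1_on wirtinger_C1_on_const)

lemma C2_on_linear:
  fixes f :: "complex \<Rightarrow> 'a::real_normed_vector" and L :: "'a \<Rightarrow> 'b::real_normed_vector"
  assumes S: "open S" and "C2_on S f" and L: "bounded_linear L"
  shows "C2_on S (\<lambda>z. L (f z))"
proof -
  have C1: "C1_on S f" "C1_on S (partial_u f)" "C1_on S (partial_v f)"
    using assms(2) unfolding C2_on_def by auto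
  note linear_partials = C1_partials_on_linear[OF C1_on_imp_C1_partials_on[OF S] L]
  have Lf: "C1_partials_on S (\<lambda>z. L (f z)) (\<lambda>z. L (partial_u f z)) (\<lambda>z. L (partial_v f z))"
    by (rule linear_partials[OF C1(1)])
  have "C1_partials_on S (partial_u (\<lambda>z. L (f z)))
      (\<lambda>z. L (partial_u (partial_u f) z)) (\<lambda>z. L (partial_v (partial_u f) z))"
    using linear_partials[OF C1(2)]
    by (rule C1_partials_on_cong[OF _ S]) (auto simp: C1_partials_on_partial_derivatives[OF Lf])
  moreover have "C1_partials_on S (partial_v (\<lambda>z. L (f z)))
      (\<lambda>z. L (partial_u (partial_v f) z)) (\<lambda>z. L (partial_v (partial_v f) z))"
    using linear_partials[OF C1(3)]
    by (rule C1_partials_on_cong[OF _ S]) (auto simp: C1_partials_on_partial_derivatives[OF Lf])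
  ultimately show ?thesis
    unfolding C2_on_def using Lf by (blast intro: C1_partials_on_imp_C1_on)
qed

lemma wirtinger_C1_on_real_imp_C2_on:
  fixes R :: "complex \<Rightarrow> real"
  assumes "open S" and "wirtinger_C1_on S (\<lambda>z. of_real (R z)) a b"
    and "wirtinger_C1_on S a a1 b1" "wirtinger_C1_on S b a2 b2"
  shows "C2_on S R"
  using C2_on_linear[OF assms(1) wirtinger_C1_on_imp_C2_on[OF assms] bounded_linear_Re] by simp

lemma C2_on_real_imp_wirtinger:
  fixes P :: "complex \<Rightarrow> real"
  assumes S: "open S" and "C2_on S P"
  obtains A where "wirtinger_C1_on S (dz (\<lambda>w. of_real (P w))) A (dz (dzbar (\<lambda>w. of_real (P w))))"
    and "\<And>z. z \<in> S \<Longrightarrow> Im (dz (dzbar (\<lambda>w. of_real (P w))) z) = 0"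
proof -
  define Pu Pv where "Pu = partial_u P" and "Pv = partial_v P"
  have P: "C1_partials_on S P Pu Pv" and Pu: "C1_partials_on S Pu (partial_u Pu) (partial_v Pu)"
    and Pv: "C1_partials_on S Pv (partial_u Pv) (partial_v Pv)"
    using assms(2) unfolding C2_on_def Pu_def Pv_def by (auto intro: C1_on_imp_C1_partials_on[OF S])
  note complex_partials = C1_partials_on_imp_wirtinger_C1_on[OF C1_partials_on_linear[OF _ bounded_linear_of_real]]
  define p where "p z = (1/2) * (complex_of_real (Pu z) - \<i> * complex_of_real (Pv z))" for z
  \<comment> \<open>B is the dzbar-derivative of p = dz P, i.e. (P_uu + P_vv + i (P_uv - P_vu)) / 4\<close>
  define B where "B z = (1/2) * ((of_real (partial_u Pu z) + \<i> * of_real (partial_v Pu z)) / 2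
      - \<i> * ((of_real (partial_u Pv z) + \<i> * of_real (partial_v Pv z)) / 2))" for z
  obtain A where wp: "wirtinger_C1_on S p A B"
    using wirtinger_C1_on_cmult[OF wirtinger_C1_on_diff[OF complex_partials[OF Pu]
        wirtinger_C1_on_cmult[OF complex_partials[OF Pv]]], of "1/2" \<i>]
    unfolding p_def[symmetric] B_def[symmetric] by blast
  have B_real: "Im (B z) = 0" if "z \<in> S" for z
    using C1_partials_on_mixed_partials_eq[OF S P Pu Pv that] by (simp add: B_def)
  have P_wirtinger: "wirtinger_C1_on S (\<lambda>w. of_real (P w)) p (\<lambda>z. cnj (p z))"
    using complex_partials[OF P] by (rule wirtinger_C1_on_cong[OF _ S]) (auto simp: p_def complex_eq_iff)
  have "wirtinger_C1_on S (dzbar (\<lambda>w. of_real (P w))) (\<lambda>z. cnj (B z)) (\<lambda>z. cnj (A z))"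
    using wirtinger_C1_on_cnj[OF wp]
    by (rule wirtinger_C1_on_cong[OF _ S]) (auto simp: wirtinger_C1_on_derivatives(2)[OF P_wirtinger])
  then have dz_dzbar: "dz (dzbar (\<lambda>w. of_real (P w))) z = B z" if "z \<in> S" for z
    using wirtinger_C1_on_derivatives(1)[OF _ that] B_real[OF that] by (simp add: complex_eq_iff)
  show ?thesis
  proof
    show "wirtinger_C1_on S (dz (\<lambda>w. of_real (P w))) A (dz (dzbar (\<lambda>w. of_real (P w))))"
      using wp by (rule wirtinger_C1_on_cong[OF _ S])
        (auto simp: dz_dzbar wirtinger_C1_on_derivatives(1)[OF P_wirtinger])
  qed (simp add: dz_dzbar B_real)
qed

lemma dz_dzbar_eq_of_dz_eq:
  fixes R :: "complex \<Rightarrow> real"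
  assumes S: "open S" and "C2_on S R" and F: "wirtinger_C1_on S F a b"
    and "\<And>z. z \<in> S \<Longrightarrow> dz (\<lambda>w. of_real (R w)) z = F z" and z: "z \<in> S"
  shows "dz (dzbar (\<lambda>w. of_real (R w))) z = b z"
proof -
  obtain A where "wirtinger_C1_on S (dz (\<lambda>w. of_real (R w))) A (dz (dzbar (\<lambda>w. of_real (R w))))"
    using C2_on_real_imp_wirtinger[OF S assms(2)] by blast
  then have "wirtinger_C1_on S F A (dz (dzbar (\<lambda>w. of_real (R w))))"
    by (rule wirtinger_C1_on_cong[OF _ S]) (simp_all add: assms(4))
  then show ?thesis
    using wirtinger_C1_on_derivatives(2)[OF _ z] F by metis
qed

section \<open>Real primitives of closed forms \<open>F dz + cnj F dzbar\<close>\<close>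

lemma wirtinger_C1_on_has_vector_derivative:
  assumes "wirtinger_C1_on U F a b" "\<gamma> s \<in> U" "(\<gamma> has_vector_derivative \<gamma>') (at s)"
  shows "((\<lambda>s. F (\<gamma> s)) has_vector_derivative a (\<gamma> s) * \<gamma>' + b (\<gamma> s) * cnj \<gamma>') (at s)"
proof -
  have "(F has_derivative (\<lambda>h. a (\<gamma> s) * h + b (\<gamma> s) * cnj h)) (at (\<gamma> s))"
    using assms(1,2) unfolding wirtinger_C1_on_def by blast
  from has_derivative_compose[OF assms(3)[unfolded has_vector_derivative_def] this]
  show ?thesis
    unfolding has_vector_derivative_def by (simp add: scaleR_conv_of_real algebra_simps)
qed

lemma convex_of_real_mult_mem:
  assumes "convex U" "0 \<in> U" "w \<in> U" "t \<in> {0..1}"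
  shows "of_real t * w \<in> U"
  using convexD[OF assms(1-3), of "1 - t" t] assms(4) by (simp add: scaleR_conv_of_real)

lemma convex_segment_neighbourhood:
  fixes U :: "complex set"
  assumes "open U" "convex U" "0 \<in> U" "z \<in> U"
  obtains r where "r > 0" "\<And>s t. \<bar>s\<bar> < r \<Longrightarrow> t \<in> {0..1} \<Longrightarrow> of_real t * (z + of_real s * e) \<in> U"
proof -
  obtain r where r: "r > 0" "ball z r \<subseteq> U"
    using assms(1,4) open_contains_ball by blast
  have "cmod e + 1 > 0"
    using norm_ge_zero[of e] by linarith
  show ?thesis
  proof (rule that[of "r / (cmod e + 1)"])
    show "r / (cmod e + 1) > 0"
      using r(1) \<open>cmod e + 1 > 0\<close> by simp
    fix s t :: real
    assume "\<bar>s\<bar> < r / (cmod e + 1)" "t \<in> {0..1}"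
    then have "\<bar>s\<bar> * (cmod e + 1) < r"
      using \<open>cmod e + 1 > 0\<close> by (simp add: pos_less_divide_eq)
    moreover have "dist z (z + of_real s * e) \<le> \<bar>s\<bar> * (cmod e + 1)"
      unfolding dist_norm norm_minus_commute[of z] by (simp add: norm_mult algebra_simps)
    ultimately have "z + of_real s * e \<in> U"
      using r(2) by auto
    then show "of_real t * (z + of_real s * e) \<in> U"
      using convex_of_real_mult_mem[OF assms(2,3)] \<open>t \<in> {0..1}\<close> by blast
  qed
qed

definition radial_potential :: "(complex \<Rightarrow> complex) \<Rightarrow> complex \<Rightarrow> real" where
  "radial_potential F z = integral {0..1} (\<lambda>t. 2 * Re (F (of_real t * z) * z))"

lemma radial_potential_has_vector_derivative_integral:
  assumes U: "open U" "convex U" "0 \<in> U" and F: "wirtinger_C1_on U F a b" and z: "z \<in> U"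
  shows "((\<lambda>s. radial_potential F (z + of_real s * e)) has_vector_derivative
      integral {0..1} (\<lambda>t. 2 * Re (F (of_real t * z) * e +
        (a (of_real t * z) * (of_real t * e) + b (of_real t * z) * cnj (of_real t * e)) * z))) (at 0)"
proof -
  obtain r where "r > 0"
    and segment: "\<And>s t. \<bar>s\<bar> < r \<Longrightarrow> t \<in> {0..1} \<Longrightarrow> of_real t * (z + of_real s * e) \<in> U"
    using convex_segment_neighbourhood[OF U z] by blast
  define X where "X = ball (0::real) r"
  define \<gamma> where "\<gamma> s t = of_real t * (z + of_real s * e)" for s t :: real
  have \<gamma>_in: "\<gamma> s t \<in> U" if "s \<in> X" "t \<in> cbox 0 1" for s t
    using segment that by (simp add: \<gamma>_def X_def dist_real_def)
  have cont: "continuous_on (X \<times> cbox 0 1) (\<lambda>p. G (\<gamma> (fst p) (snd p)))"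
    if "continuous_on U G" for G
    using that \<gamma>_in
    by (intro continuous_on_compose2[OF that]) (auto simp: \<gamma>_def intro!: continuous_intros)
  define f where "f s t = 2 * Re (F (\<gamma> s t) * (z + of_real s * e))" for s t
  define f' where "f' s t = 2 * Re (F (\<gamma> s t) * e +
      (a (\<gamma> s t) * (of_real t * e) + b (\<gamma> s t) * cnj (of_real t * e)) * (z + of_real s * e))" for s t
  have "((\<lambda>s. f s t) has_vector_derivative f' s t) (at s within X)"
    if "s \<in> X" "t \<in> cbox 0 1" for s t
  proof -
    have "((\<lambda>s. \<gamma> s t) has_vector_derivative of_real t * e) (at s)"
      unfolding \<gamma>_def by (auto intro!: derivative_eq_intros)
    from wirtinger_C1_on_has_vector_derivative[OF F \<gamma>_in[OF that] this]
    have "((\<lambda>s. f s t) has_real_derivative f' s t) (at s)"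
      unfolding f_def f'_def by (auto intro!: derivative_eq_intros)
    then show ?thesis
      by (simp add: has_real_derivative_iff_has_vector_derivative has_vector_derivative_at_within)
  qed
  moreover have "f s integrable_on cbox 0 1" if "s \<in> X" for s
  proof -
    have "continuous_on (cbox 0 1) (\<lambda>t. F (\<gamma> s t))"
      by (rule continuous_on_compose2[OF wirtinger_C1_on_imp_continuous_on[OF F]])
        (use \<gamma>_in[OF that] in \<open>auto simp: \<gamma>_def intro!: continuous_intros\<close>)
    then show ?thesis
      unfolding f_def by (intro integrable_continuous continuous_intros)
  qed
  moreover have "continuous_on (X \<times> cbox 0 1) (\<lambda>(s, t). f' s t)"
    using F wirtinger_C1_on_imp_continuous_on[OF F] unfolding wirtinger_C1_on_def case_prod_unfold f'_def
    by (intro continuous_intros cont) auto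
  moreover have "0 \<in> X" "convex X"
    using \<open>r > 0\<close> by (auto simp: X_def)
  ultimately have "((\<lambda>s. integral (cbox 0 1) (f s)) has_vector_derivative integral (cbox 0 1) (f' 0))
      (at 0 within X)"
    by (rule leibniz_rule_vector_derivative)
  moreover have "at 0 within X = at 0"
    using \<open>0 \<in> X\<close> by (intro at_within_open) (simp_all add: X_def)
  moreover have "integral (cbox 0 1) (f s) = radial_potential F (z + of_real s * e)" for s
    by (simp add: radial_potential_def f_def[abs_def] \<gamma>_def)
  moreover have "f' 0 = (\<lambda>t. 2 * Re (F (of_real t * z) * e +
      (a (of_real t * z) * (of_real t * e) + b (of_real t * z) * cnj (of_real t * e)) * z))"
    by (simp add: f'_def[abs_def] \<gamma>_def)
  ultimately show ?thesis
    by simp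
qed

lemma integral_radial_derivative:
  assumes U: "convex U" "0 \<in> U" and F: "wirtinger_C1_on U F a b"
    and b: "\<And>w. w \<in> U \<Longrightarrow> Im (b w) = 0" and z: "z \<in> U"
  shows "integral {0..1} (\<lambda>t. 2 * Re (F (of_real t * z) * e +
      (a (of_real t * z) * (of_real t * e) + b (of_real t * z) * cnj (of_real t * e)) * z)) = 2 * Re (F z * e)"
proof -
  define G where "G t = t * (2 * Re (F (of_real t * z) * e))" for t :: real
  have "(G has_vector_derivative 2 * Re (F (of_real t * z) * e +
      (a (of_real t * z) * (of_real t * e) + b (of_real t * z) * cnj (of_real t * e)) * z)) (at t within {0..1})"
    if t: "t \<in> {0..1}" for t
  proof -
    define w where "w = of_real t * z"
    have "w \<in> U"
      unfolding w_def by (rule convex_of_real_mult_mem[OF U z t])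
    have "((\<lambda>t. of_real t * z) has_vector_derivative z) (at t)"
      by (auto intro!: derivative_eq_intros)
    from wirtinger_C1_on_has_vector_derivative[OF F _ this] \<open>w \<in> U\<close>
    have "(G has_real_derivative 2 * Re (F w * e) + t * (2 * Re ((a w * z + b w * cnj z) * e))) (at t)"
      unfolding G_def w_def by (auto intro!: derivative_eq_intros)
    moreover have "2 * Re (F w * e) + t * (2 * Re ((a w * z + b w * cnj z) * e)) =
        2 * Re (F w * e + (a w * (of_real t * e) + b w * cnj (of_real t * e)) * z)"
      using b[OF \<open>w \<in> U\<close>] by (simp add: algebra_simps)
    ultimately show ?thesis
      by (simp add: has_real_derivative_iff_has_vector_derivative has_vector_derivative_at_within w_def)
  qed
  from fundamental_theorem_of_calculus[OF _ this]
  show ?thesis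
    by (simp add: integral_unique G_def)
qed

lemma radial_potential_wirtinger_C1_on:
  assumes U: "open U" "convex U" "0 \<in> U" and F: "wirtinger_C1_on U F a b"
    and b: "\<And>w. w \<in> U \<Longrightarrow> Im (b w) = 0"
  shows "wirtinger_C1_on U (\<lambda>z. of_real (radial_potential F z)) F (\<lambda>z. cnj (F z))"
proof -
  have d: "((\<lambda>s. radial_potential F (z + of_real s * e)) has_vector_derivative 2 * Re (F z * e)) (at 0)"
    if "z \<in> U" for z e
    using radial_potential_has_vector_derivative_integral[OF U F that, of e]
    by (simp only: integral_radial_derivative[OF U(2,3) F b that])
  have du: "((\<lambda>s. radial_potential F (z + of_real s)) has_vector_derivative 2 * Re (F z)) (at 0)"
    and dv: "((\<lambda>s. radial_potential F (z + \<i> * of_real s)) has_vector_derivative - 2 * Im (F z)) (at 0)"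
    if "z \<in> U" for z
    using d[OF that, of 1] d[OF that, of \<i>] by (simp_all add: mult.commute)
  have "continuous_on U (\<lambda>z. 2 * Re (F z))" "continuous_on U (\<lambda>z. - 2 * Im (F z))"
    using wirtinger_C1_on_imp_continuous_on[OF F] by (auto intro!: continuous_intros)
  then have "C1_partials_on U (radial_potential F) (\<lambda>z. 2 * Re (F z)) (\<lambda>z. - 2 * Im (F z))"
    unfolding C1_partials_on_def using has_derivative_of_partials[OF U(1) _ du dv] by blast
  from C1_partials_on_imp_wirtinger_C1_on[OF C1_partials_on_linear[OF this bounded_linear_of_real]]
  show ?thesis
    by (rule wirtinger_C1_on_cong[OF _ U(1)]) (simp_all add: complex_eq_iff)
qed

lemma deriv_left_inverse_mult_deriv:
  assumes S: "open S" "\<phi> holomorphic_on S" and T: "open T" "\<psi> holomorphic_on T"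
    and "\<phi> ` S \<subseteq> T" "\<And>z. z \<in> S \<Longrightarrow> \<psi> (\<phi> z) = z" and z: "z \<in> S"
  shows "deriv \<psi> (\<phi> z) * deriv \<phi> z = 1"
proof -
  have "\<phi> z \<in> T"
    using assms(5) z by blast
  have "((\<lambda>z. \<psi> (\<phi> z)) has_field_derivative deriv \<psi> (\<phi> z) * deriv \<phi> z) (at z)"
    by (rule DERIV_chain2[OF holomorphic_derivI[OF T(2,1) \<open>\<phi> z \<in> T\<close>] holomorphic_derivI[OF S(2,1) z]])
  then have "((\<lambda>z. z) has_field_derivative deriv \<psi> (\<phi> z) * deriv \<phi> z) (at z)"
    by (rule has_field_derivative_transform_within_open[OF _ S(1) z]) (use assms in auto)
  then show ?thesis
    using DERIV_ident DERIV_unique by blast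
qed

text \<open>The function F (psi w) * psi' w represents the pullback of F dz under psi; its
  dzbar-derivative b (psi w) * |psi' w|^2 is again real.\<close>

lemma radial_potential_pullback_wirtinger_C1_on:
  assumes S: "open S" and F: "wirtinger_C1_on S F a b" and b: "\<And>z. z \<in> S \<Longrightarrow> Im (b z) = 0"
    and \<phi>: "\<phi> holomorphic_on S" "\<phi> ` S \<subseteq> ball 0 1"
    and \<psi>: "\<psi> holomorphic_on ball 0 1" "\<psi> ` ball 0 1 \<subseteq> S" and inv: "\<And>z. z \<in> S \<Longrightarrow> \<psi> (\<phi> z) = z"
  shows "wirtinger_C1_on S (\<lambda>z. of_real (radial_potential (\<lambda>w. F (\<psi> w) * deriv \<psi> w) (\<phi> z)))
    F (\<lambda>z. cnj (F z))"
proof -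
  define B where "B = ball (0::complex) 1"
  have B: "open B" "convex B" "0 \<in> B"
    by (auto simp: B_def)
  define Ft where "Ft w = F (\<psi> w) * deriv \<psi> w" for w
  have "wirtinger_C1_on B Ft (\<lambda>w. a (\<psi> w) * deriv \<psi> w * deriv \<psi> w + F (\<psi> w) * deriv (deriv \<psi>) w)
      (\<lambda>w. b (\<psi> w) * cnj (deriv \<psi> w) * deriv \<psi> w + F (\<psi> w) * 0)"
    unfolding Ft_def using \<psi> B(1)
    by (intro wirtinger_C1_on_mult wirtinger_C1_on_compose_holomorphic[OF F] holomorphic_on_imp_wirtinger_C1_on
        holomorphic_deriv holomorphic_derivI holomorphic_on_imp_continuous_on) (auto simp: B_def)
  moreover have "Im (b (\<psi> w) * cnj (deriv \<psi> w) * deriv \<psi> w + F (\<psi> w) * 0) = 0" if "w \<in> B" for w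
  proof -
    have "\<psi> w \<in> S"
      using \<psi>(2) that by (auto simp: B_def)
    then show ?thesis
      using b by (simp add: algebra_simps)
  qed
  ultimately have "wirtinger_C1_on B (\<lambda>w. of_real (radial_potential Ft w)) Ft (\<lambda>w. cnj (Ft w))"
    by (rule radial_potential_wirtinger_C1_on[OF B])
  then have "wirtinger_C1_on S (\<lambda>z. of_real (radial_potential Ft (\<phi> z)))
      (\<lambda>z. Ft (\<phi> z) * deriv \<phi> z) (\<lambda>z. cnj (Ft (\<phi> z)) * cnj (deriv \<phi> z))"
    using \<phi> S
    by (intro wirtinger_C1_on_compose_holomorphic holomorphic_derivI
        holomorphic_on_imp_continuous_on holomorphic_deriv) (auto simp: B_def)
  moreover have Ft_\<phi>: "Ft (\<phi> z) * deriv \<phi> z = F z" if "z \<in> S" for z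
    using deriv_left_inverse_mult_deriv[OF S \<phi>(1) _ \<psi>(1) \<phi>(2) inv that] inv that
    by (simp add: Ft_def mult.assoc)
  ultimately show ?thesis
    unfolding Ft_def[symmetric]
    by (elim wirtinger_C1_on_cong[OF _ S]) (simp_all add: Ft_\<phi>[symmetric])
qed

lemma exists_real_potential_wirtinger:
  assumes S: "open S" "simply_connected S" and F: "wirtinger_C1_on S F a b"
    and b: "\<And>z. z \<in> S \<Longrightarrow> Im (b z) = 0"
  obtains R where "wirtinger_C1_on S (\<lambda>z. of_real (R z)) F (\<lambda>z. cnj (F z))"
proof -
  consider "S = {}" | "S = UNIV"
    | \<phi> \<psi> where "\<phi> holomorphic_on S" "\<psi> holomorphic_on ball 0 1"
        "\<forall>z\<in>S. \<phi> z \<in> ball 0 1 \<and> \<psi> (\<phi> z) = z" "\<forall>z\<in>ball 0 1. \<psi> z \<in> S \<and> \<phi> (\<psi> z) = z"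
    using Riemann_mapping_theorem[of S] S by blast
  then show ?thesis
  proof cases
    case 1
    then show ?thesis
      using that[of "\<lambda>z. 0"] by (simp add: wirtinger_C1_on_def)
  next
    case 2
    then show ?thesis
      using that radial_potential_wirtinger_C1_on[of S F a b] F b by auto
  next
    case 3
    then have "wirtinger_C1_on S (\<lambda>z. of_real (radial_potential (\<lambda>w. F (\<psi> w) * deriv \<psi> w) (\<phi> z)))
        F (\<lambda>z. cnj (F z))"
      by (intro radial_potential_pullback_wirtinger_C1_on[OF S(1) F] b) auto
    then show ?thesis
      by (rule that)
  qed
qed

lemma exists_C2_real_potential:
  assumes "open S" "simply_connected S" and F: "wirtinger_C1_on S F a b"
    and "\<And>z. z \<in> S \<Longrightarrow> Im (b z) = 0"
  shows "\<exists>R. C2_on S R \<and> (\<forall>z\<in>S. dz (\<lambda>w. of_real (R w)) z = F z)"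
proof -
  obtain R where R: "wirtinger_C1_on S (\<lambda>z. of_real (R z)) F (\<lambda>z. cnj (F z))"
    using exists_real_potential_wirtinger[OF assms] .
  have "C2_on S R"
    by (rule wirtinger_C1_on_real_imp_C2_on[OF assms(1) R F wirtinger_C1_on_cnj[OF F]])
  moreover have "\<forall>z\<in>S. dz (\<lambda>w. of_real (R w)) z = F z"
    using wirtinger_C1_on_derivatives(1)[OF R] by blast
  ultimately show ?thesis
    by blast
qed

section \<open>The deformation\<close>

definition deformed_Qz ::
  "real \<Rightarrow> (complex \<Rightarrow> complex) \<Rightarrow> (complex \<Rightarrow> real) \<Rightarrow> (complex \<Rightarrow> real) \<Rightarrow> complex \<Rightarrow> complex"
  where
  "deformed_Qz lam g P Q z =
     (1 / g z + \<i> * of_real lam) *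
     (g z * dz (\<lambda>w. of_real (Q w)) z - \<i> * of_real lam * dz (\<lambda>w. of_real (P w)) z)"

lemma deformation_factor_eq:
  fixes g :: complex and lam :: real
  assumes "g \<noteq> 0"
  shows "(1 / g + \<i> * of_real lam) * (g - \<i> * of_real lam * of_real ((cmod g)\<^sup>2))
    = of_real ((cmod (1 + \<i> * of_real lam * g))\<^sup>2)"
  using assms unfolding complex_norm_square by (simp add: field_simps)

lemma deformed_nondegeneracy_identity:
  fixes g p q :: complex and lam :: real
  defines "w \<equiv> 1 + \<i> * of_real lam * g"
  assumes "g \<noteq> 0" "w \<noteq> 0"
  shows "p - of_real ((cmod (g / w))\<^sup>2) * ((1 / g + \<i> * of_real lam) * (g * q - \<i> * of_real lam * p))
    = (p - of_real ((cmod g)\<^sup>2) * q) / cnj w"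
proof -
  have "cnj w \<noteq> 0"
    using assms(3) by simp
  have "1 / g + \<i> * of_real lam = w / g"
    using assms(2) by (simp add: w_def field_simps)
  then have factor: "of_real ((cmod (g / w))\<^sup>2) * (1 / g + \<i> * of_real lam) = cnj g / cnj w"
    using assms(2,3) \<open>cnj w \<noteq> 0\<close> unfolding complex_norm_square by (simp add: field_simps)
  have "p - of_real ((cmod (g / w))\<^sup>2) * ((1 / g + \<i> * of_real lam) * (g * q - \<i> * of_real lam * p))
      = p - cnj g / cnj w * (g * q - \<i> * of_real lam * p)"
    by (metis factor mult.assoc)
  also have "\<dots> = (p * (cnj w + \<i> * of_real lam * cnj g) - cnj g * g * q) / cnj w"
    using \<open>cnj w \<noteq> 0\<close> by (simp add: field_simps)
  also have "cnj w + \<i> * of_real lam * cnj g = 1"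
    by (simp add: w_def)
  finally show ?thesis
    unfolding complex_norm_square by (simp add: mult.commute)
qed

lemma weierstrass_first_kind_holomorphic:
  assumes "open \<Omega>" "weierstrass_first_kind \<Omega> g P Q"
  shows "g holomorphic_on \<Omega>"
proof -
  have "C1_on \<Omega> g" "\<And>z. z \<in> \<Omega> \<Longrightarrow> dzbar g z = 0"
    using assms(2) unfolding weierstrass_first_kind_def C2_on_def by auto
  then have "wirtinger_C1_on \<Omega> g (dz g) (\<lambda>z. 0)"
    by (auto elim!: wirtinger_C1_on_cong[OF C1_on_imp_wirtinger_C1_on[OF assms(1)] assms(1)])
  then show ?thesis
    by (rule wirtinger_C1_on_imp_holomorphic_on)
qed

lemma wirtinger_C1_on_deformed_Qz:
  assumes \<Omega>: "open \<Omega>" and W: "weierstrass_first_kind \<Omega> g P Q"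
  obtains A where "wirtinger_C1_on \<Omega> (deformed_Qz lam g P Q) A
      (\<lambda>z. of_real ((cmod (1 + \<i> * of_real lam * g z))\<^sup>2) * dz (dzbar (\<lambda>w. of_real (Q w))) z)"
    and "\<And>z. z \<in> \<Omega> \<Longrightarrow>
      Im (of_real ((cmod (1 + \<i> * of_real lam * g z))\<^sup>2) * dz (dzbar (\<lambda>w. of_real (Q w))) z) = 0"
proof -
  have C2: "C2_on \<Omega> P" "C2_on \<Omega> Q" and g0: "\<And>z. z \<in> \<Omega> \<Longrightarrow> g z \<noteq> 0"
    and PQ: "\<And>z. z \<in> \<Omega> \<Longrightarrow> dz (dzbar (\<lambda>w. of_real (P w))) z
      = of_real ((cmod (g z))\<^sup>2) * dz (dzbar (\<lambda>w. of_real (Q w))) z"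
    using W unfolding weierstrass_first_kind_def by auto
  have g: "wirtinger_C1_on \<Omega> g (deriv g) (\<lambda>z. 0)"
    by (rule holomorphic_on_imp_wirtinger_C1_on[OF weierstrass_first_kind_holomorphic[OF \<Omega> W] \<Omega>])
  obtain AP where P: "wirtinger_C1_on \<Omega> (dz (\<lambda>w. of_real (P w))) AP (dz (dzbar (\<lambda>w. of_real (P w))))"
    using C2_on_real_imp_wirtinger[OF \<Omega> C2(1)] by blast
  obtain AQ where Q: "wirtinger_C1_on \<Omega> (dz (\<lambda>w. of_real (Q w))) AQ (dz (dzbar (\<lambda>w. of_real (Q w))))"
    and Q_real: "\<And>z. z \<in> \<Omega> \<Longrightarrow> Im (dz (dzbar (\<lambda>w. of_real (Q w))) z) = 0"
    using C2_on_real_imp_wirtinger[OF \<Omega> C2(2)] by blast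
  have "wirtinger_C1_on \<Omega> (\<lambda>z. 1 / g z) (\<lambda>z. - deriv g z / (g z)\<^sup>2) (\<lambda>z. 0)"
    using wirtinger_C1_on_inverse[OF g g0]
    by (rule wirtinger_C1_on_cong[OF _ \<Omega>]) (simp_all add: inverse_eq_divide)
  note F = wirtinger_C1_on_mult[OF wirtinger_C1_on_add[OF this wirtinger_C1_on_const]
      wirtinger_C1_on_diff[OF wirtinger_C1_on_mult[OF g Q] wirtinger_C1_on_cmult[OF P, where k = "\<i> * of_real lam"]]]
  show ?thesis
  proof (rule that[OF wirtinger_C1_on_cong[OF F \<Omega> _ refl]])
    fix z assume "z \<in> \<Omega>"
    then show "deformed_Qz lam g P Q z = (1 / g z + \<i> * of_real lam) *
        (g z * dz (\<lambda>w. of_real (Q w)) z - \<i> * of_real lam * dz (\<lambda>w. of_real (P w)) z)"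
      by (simp add: deformed_Qz_def)
    show "of_real ((cmod (1 + \<i> * of_real lam * g z))\<^sup>2) * dz (dzbar (\<lambda>w. of_real (Q w))) z =
      (0 + 0) * (g z * dz (\<lambda>w. of_real (Q w)) z - \<i> * of_real lam * dz (\<lambda>w. of_real (P w)) z) +
      (1 / g z + \<i> * of_real lam) * (0 * dz (\<lambda>w. of_real (Q w)) z + g z * dz (dzbar (\<lambda>w. of_real (Q w))) z
        - \<i> * of_real lam * dz (dzbar (\<lambda>w. of_real (P w))) z)"
      unfolding deformation_factor_eq[OF g0[OF \<open>z \<in> \<Omega>\<close>], of lam, symmetric]
      by (simp add: PQ[OF \<open>z \<in> \<Omega>\<close>] algebra_simps)
    show "Im (of_real ((cmod (1 + \<i> * of_real lam * g z))\<^sup>2) * dz (dzbar (\<lambda>w. of_real (Q w))) z) = 0"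
      using Q_real[OF \<open>z \<in> \<Omega>\<close>] by simp
  qed
qed

lemma weierstrass_first_kind_deformed:
  assumes \<Omega>: "open \<Omega>" and W: "weierstrass_first_kind \<Omega> g P Q"
    and w: "\<And>z. z \<in> \<Omega> \<Longrightarrow> 1 + \<i> * of_real lam * g z \<noteq> 0"
    and Ql: "C2_on \<Omega> Ql" "\<And>z. z \<in> \<Omega> \<Longrightarrow> dz (\<lambda>w. of_real (Ql w)) z = deformed_Qz lam g P Q z"
  shows "weierstrass_first_kind \<Omega> (\<lambda>z. g z / (1 + \<i> * of_real lam * g z)) P Ql"
proof -
  have C2: "C2_on \<Omega> P" and g0: "\<And>z. z \<in> \<Omega> \<Longrightarrow> g z \<noteq> 0"
    and PQ: "\<And>z. z \<in> \<Omega> \<Longrightarrow> dz (dzbar (\<lambda>w. of_real (P w))) z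
      = of_real ((cmod (g z))\<^sup>2) * dz (dzbar (\<lambda>w. of_real (Q w))) z"
    and nondeg: "\<And>z. z \<in> \<Omega> \<Longrightarrow> dz (\<lambda>w. of_real (P w)) z
      - of_real ((cmod (g z))\<^sup>2) * dz (\<lambda>w. of_real (Q w)) z \<noteq> 0"
    using W unfolding weierstrass_first_kind_def by auto
  obtain A where F: "wirtinger_C1_on \<Omega> (deformed_Qz lam g P Q) A
      (\<lambda>z. of_real ((cmod (1 + \<i> * of_real lam * g z))\<^sup>2) * dz (dzbar (\<lambda>w. of_real (Q w))) z)"
    using wirtinger_C1_on_deformed_Qz[OF \<Omega> W, where lam = lam] by blast
  have Ql_zzbar: "dz (dzbar (\<lambda>w. of_real (Ql w))) z
      = of_real ((cmod (1 + \<i> * of_real lam * g z))\<^sup>2) * dz (dzbar (\<lambda>w. of_real (Q w))) z"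
    if "z \<in> \<Omega>" for z
    using dz_dzbar_eq_of_dz_eq[OF \<Omega> Ql(1) F _ that] Ql(2) by blast
  define gl where "gl z = g z / (1 + \<i> * of_real lam * g z)" for z
  have "gl holomorphic_on \<Omega>"
    unfolding gl_def using weierstrass_first_kind_holomorphic[OF \<Omega> W] w
    by (auto intro!: holomorphic_intros)
  note gl = holomorphic_on_imp_C2_on[OF \<Omega> this]
    wirtinger_C1_on_derivatives(2)[OF holomorphic_on_imp_wirtinger_C1_on[OF this \<Omega>]]
  have "gl z \<noteq> 0 \<and> dzbar gl z = 0 \<and>
      dz (dzbar (\<lambda>w. of_real (P w))) z = of_real ((cmod (gl z))\<^sup>2) * dz (dzbar (\<lambda>w. of_real (Ql w))) z \<and>
      dz (\<lambda>w. of_real (P w)) z - of_real ((cmod (gl z))\<^sup>2) * dz (\<lambda>w. of_real (Ql w)) z \<noteq> 0"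
    if z: "z \<in> \<Omega>" for z
  proof (intro conjI)
    show "gl z \<noteq> 0" "dzbar gl z = 0"
      using g0[OF z] w[OF z] gl(2)[OF z] by (simp_all add: gl_def)
    have "(cmod (gl z))\<^sup>2 * (cmod (1 + \<i> * of_real lam * g z))\<^sup>2 = (cmod (g z))\<^sup>2"
      using w[OF z] by (simp add: gl_def norm_divide power_divide)
    then show "dz (dzbar (\<lambda>w. of_real (P w))) z
        = of_real ((cmod (gl z))\<^sup>2) * dz (dzbar (\<lambda>w. of_real (Ql w))) z"
      unfolding Ql_zzbar[OF z] PQ[OF z] by (metis mult.assoc of_real_mult)
    show "dz (\<lambda>w. of_real (P w)) z - of_real ((cmod (gl z))\<^sup>2) * dz (\<lambda>w. of_real (Ql w)) z \<noteq> 0"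
      using nondeg[OF z] w[OF z] complex_cnj_zero_iff[of "1 + \<i> * of_real lam * g z"]
      unfolding Ql(2)[OF z] deformed_Qz_def gl_def deformed_nondegeneracy_identity[OF g0[OF z] w[OF z]]
      by simp
  qed
  then show ?thesis
    using gl(1) C2 Ql(1) unfolding weierstrass_first_kind_def gl_def by blast
qed

theorem mainTheorem3:
  fixes \<Omega> :: "complex set" and g :: "complex \<Rightarrow> complex"
    and P Q :: "complex \<Rightarrow> real" and lam :: real
  assumes "open \<Omega>" and "connected \<Omega>" and "simply_connected \<Omega>"
    and "weierstrass_first_kind \<Omega> g P Q"
    and "\<forall>z\<in>\<Omega>. 1 + \<i> * complex_of_real lam * g z \<noteq> 0"
  shows "(\<exists>Ql :: complex \<Rightarrow> real. C2_on \<Omega> Ql \<and>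
            (\<forall>z\<in>\<Omega>. dz (\<lambda>w. complex_of_real (Ql w)) z
               = (1 / g z + \<i> * complex_of_real lam) *
                 (g z * dz (\<lambda>w. complex_of_real (Q w)) z
                  - \<i> * complex_of_real lam * dz (\<lambda>w. complex_of_real (P w)) z)))
       \<and> (\<forall>Ql :: complex \<Rightarrow> real. C2_on \<Omega> Ql \<and>
            (\<forall>z\<in>\<Omega>. dz (\<lambda>w. complex_of_real (Ql w)) z
               = (1 / g z + \<i> * complex_of_real lam) *
                 (g z * dz (\<lambda>w. complex_of_real (Q w)) z
                  - \<i> * complex_of_real lam * dz (\<lambda>w. complex_of_real (P w)) z))
            \<longrightarrow> weierstrass_first_kind \<Omega> (\<lambda>z. g z / (1 + \<i> * complex_of_real lam * g z)) P Ql)"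
proof -
  obtain A where F: "wirtinger_C1_on \<Omega> (deformed_Qz lam g P Q) A
      (\<lambda>z. of_real ((cmod (1 + \<i> * of_real lam * g z))\<^sup>2) * dz (dzbar (\<lambda>w. of_real (Q w))) z)"
    and F_real: "\<And>z. z \<in> \<Omega> \<Longrightarrow>
      Im (of_real ((cmod (1 + \<i> * of_real lam * g z))\<^sup>2) * dz (dzbar (\<lambda>w. of_real (Q w))) z) = 0"
    using wirtinger_C1_on_deformed_Qz[OF assms(1,4), where lam = lam] by blast
  from exists_C2_real_potential[OF assms(1,3) F F_real]
  show ?thesis
    using weierstrass_first_kind_deformed[OF assms(1,4)] assms(5) unfolding deformed_Qz_def by blast
qed

end
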